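(* The series $\displaystyle\sum_{\substack{p \text{ prime}\\ p+2\text{ prime}}}\frac1p$ converges. *)

theory Defs
  imports Complex_Main "HOL-Computational_Algebra.Primes"
begin

end

theory Submission
  imports Defs "HOL-Number_Theory.Cong" "HOL-Analysis.Analysis" "HOL-Real_Asymp.Real_Asymp"
begin

(* Brun's pure sieve. For n > w, if n and n + 2 are both prime then n (n + 2) has no odd prime factor
   p <= w. Inclusion-exclusion truncated at an even level r (a Bonferroni inequality), with the
   number of solutions of d | n (n + 2) counted by the Chinese remainder theorem, bounds the
   number of such n < N by N prod (1 - 2/p) plus a truncation tail and an error sum over |D| <= r
   of 2^|D|. Writing G = prod p/(p - 1), one has prod (1 - 2/p) <= 1/G^2, the tail is at most
   2^(-r) G^4, and G >= ln w / 2 is unbounded. Taking the least w with G >= K = (ln N)^(3/5) and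
   r about 10 ln K gives at most 8 N / (ln N)^(6/5) twin primes below N, so the dyadic block
   [2^k, 2^(k+1)) contributes O(k^(-6/5)) to the sum of 1/p, which therefore converges. *)

lemma alternating_choose_partial_sum:
  assumes "m > 0"
  shows "(\<Sum>j\<le>r. (-1)^j * of_nat (m choose j) :: 'a::comm_ring_1) = (-1)^r * of_nat ((m - 1) choose r)"
proof (induction r)
  case (Suc r)
  obtain k where m: "m = Suc k" using assms by (cases m) auto
  show ?case
    using Suc by (simp add: m algebra_simps)
qed simp

lemma bonferroni_even:
  assumes "finite S" "even r"
  shows "(if S = {} then 1 else 0 :: 'a::linordered_idom) \<le> (\<Sum>D | D \<subseteq> S \<and> card D \<le> r. (-1) ^ card D)"
proof (cases "S = {}")
  case True
  then have "{D. D \<subseteq> S \<and> card D \<le> r} = {{}}" by auto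
  then show ?thesis using True by simp
next
  case False
  have "(\<Sum>D | D \<subseteq> S \<and> card D \<le> r. (-1 :: 'a) ^ card D)
      = (\<Sum>j\<le>r. \<Sum>D | D \<subseteq> S \<and> card D = j. (-1) ^ card D)"
    by (subst sum.group[symmetric, where g = card and T = "{..r}"])
      (auto intro!: sum.cong arg_cong[where f = card] simp: assms(1))
  also have "\<dots> = (\<Sum>j\<le>r. (-1) ^ j * of_nat (card S choose j))"
    by (simp add: n_subsets[OF assms(1)] mult.commute)
  also have "\<dots> = of_nat ((card S - 1) choose r)"
    using False assms by (simp add: alternating_choose_partial_sum card_gt_0_iff)
  finally show ?thesis using False by simp
qed

lemma card_sifted_le_bonferroni:
  fixes E :: "'p \<Rightarrow> 'x \<Rightarrow> bool"
  assumes "finite P" "finite X" "even r"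
  shows "real (card {x\<in>X. \<forall>p\<in>P. \<not> E p x})
    \<le> (\<Sum>D | D \<subseteq> P \<and> card D \<le> r. (-1) ^ card D * real (card {x\<in>X. \<forall>p\<in>D. E p x}))"
proof -
  define DD where "DD = {D. D \<subseteq> P \<and> card D \<le> r}"
  have "finite DD" using assms(1) by (simp add: DD_def)
  have "real (card {x\<in>X. \<forall>p\<in>P. \<not> E p x}) = (\<Sum>x\<in>X. if \<forall>p\<in>P. \<not> E p x then 1 else 0)"
    using sum.inter_filter[OF assms(2), of "\<lambda>_. 1 :: real"] by simp
  also have "\<dots> = (\<Sum>x\<in>X. if {p\<in>P. E p x} = {} then 1 else 0)"
    by (intro sum.cong) auto
  also have "\<dots> \<le> (\<Sum>x\<in>X. \<Sum>D | D \<subseteq> {p\<in>P. E p x} \<and> card D \<le> r. (-1) ^ card D)"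
    using assms by (intro sum_mono bonferroni_even) auto
  also have "\<dots> = (\<Sum>x\<in>X. \<Sum>D\<in>DD. if \<forall>p\<in>D. E p x then (-1) ^ card D else 0)"
  proof (rule sum.cong[OF refl])
    fix x
    have "{D. D \<subseteq> {p\<in>P. E p x} \<and> card D \<le> r} = {D\<in>DD. \<forall>p\<in>D. E p x}"
      by (auto simp: DD_def)
    then show "(\<Sum>D | D \<subseteq> {p\<in>P. E p x} \<and> card D \<le> r. (-1) ^ card D)
      = (\<Sum>D\<in>DD. if \<forall>p\<in>D. E p x then (-1 :: real) ^ card D else 0)"
      using sum.inter_filter[OF \<open>finite DD\<close>] by simp
  qed
  also have "\<dots> = (\<Sum>D\<in>DD. (-1) ^ card D * real (card {x\<in>X. \<forall>p\<in>D. E p x}))"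
    using assms(2) by (subst sum.swap) (simp add: sum.If_cases Int_def mult.commute)
  finally show ?thesis by (simp add: DD_def)
qed

lemma bij_betw_mod_pair:
  fixes m n :: nat
  assumes "coprime m n" "m > 0" "n > 0"
  shows "bij_betw (\<lambda>x. (x mod m, x mod n)) {..<m * n} ({..<m} \<times> {..<n})"
proof (rule bij_betw_imageI)
  show "inj_on (\<lambda>x. (x mod m, x mod n)) {..<m * n}"
  proof (rule inj_onI)
    fix x y assume "x \<in> {..<m * n}" "y \<in> {..<m * n}" "(x mod m, x mod n) = (y mod m, y mod n)"
    then have "[x = y] (mod m)" "[x = y] (mod n)" "x < m * n" "y < m * n"
      by (simp_all add: Cong.cong_def)
    then show "x = y"
      using coprime_cong_mult_nat[OF _ _ assms(1)] cong_less_modulus_unique_nat by blast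
  qed
  show "(\<lambda>x. (x mod m, x mod n)) ` {..<m * n} = {..<m} \<times> {..<n}"
  proof (intro equalityI subsetI)
    fix y assume "y \<in> {..<m} \<times> {..<n}"
    then obtain a b where ab: "y = (a, b)" "a < m" "b < n" by blast
    obtain x where "x < m * n" "[x = a] (mod m)" "[x = b] (mod n)"
      using binary_chinese_remainder_unique_nat[OF assms(1), of a b] assms by auto
    with ab show "y \<in> (\<lambda>x. (x mod m, x mod n)) ` {..<m * n}"
      by (auto simp: Cong.cong_def)
  qed (use assms in auto)
qed

lemma card_residues_mod_prod:
  fixes D :: "nat set" and Q :: "nat \<Rightarrow> nat \<Rightarrow> bool"
  assumes "finite D" "\<forall>p\<in>D. prime p" "\<And>p c. p \<in> D \<Longrightarrow> Q p (c mod p) \<longleftrightarrow> Q p c"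
  shows "card {c. c < \<Prod>D \<and> (\<forall>p\<in>D. Q p c)} = (\<Prod>p\<in>D. card {c. c < p \<and> Q p c})"
  using assms
proof (induction D rule: finite_induct)
  case empty
  have "{c::nat. c < 1} = {0}" by auto
  then show ?case by simp
next
  case (insert p D)
  define d where "d = \<Prod>D"
  have "prime p" using insert.prems by simp
  have "coprime p d"
    unfolding d_def using insert.hyps(2) insert.prems(1) by (intro prod_coprime_right primes_coprime) auto
  have "d > 0" using insert.prems by (auto simp: d_def prime_gt_0_nat intro: prod_pos)
  have "p > 0" using \<open>prime p\<close> prime_gt_0_nat by blast
  have Q_mod_d: "Q q (c mod d) \<longleftrightarrow> Q q c" if "q \<in> D" for q c
  proof -
    have "q dvd d" unfolding d_def using insert.hyps(1) that by (rule dvd_prodI)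
    then have "c mod d mod q = c mod q" by (rule mod_mod_cancel)
    then show ?thesis using insert.prems(2) that by (metis insertCI)
  qed
  have bij: "bij_betw (\<lambda>x. (x mod p, x mod d))
      {c\<in>{..<p * d}. Q p c \<and> (\<forall>q\<in>D. Q q c)}
      {y\<in>{..<p} \<times> {..<d}. Q p (fst y) \<and> (\<forall>q\<in>D. Q q (snd y))}"
    by (rule bij_betw_Collect[OF bij_betw_mod_pair[OF \<open>coprime p d\<close> \<open>p > 0\<close> \<open>d > 0\<close>]])
      (simp add: Q_mod_d insert.prems(2))
  have "{y\<in>{..<p} \<times> {..<d}. Q p (fst y) \<and> (\<forall>q\<in>D. Q q (snd y))}
      = {a. a < p \<and> Q p a} \<times> {b. b < d \<and> (\<forall>q\<in>D. Q q b)}"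
    by auto
  then have "card {c\<in>{..<p * d}. Q p c \<and> (\<forall>q\<in>D. Q q c)}
      = card ({a. a < p \<and> Q p a} \<times> {b. b < d \<and> (\<forall>q\<in>D. Q q b)})"
    using bij_betw_same_card[OF bij] by simp
  also have "\<dots> = card {a. a < p \<and> Q p a} * (\<Prod>q\<in>D. card {c. c < q \<and> Q q c})"
    using insert.IH insert.prems by (simp add: card_cartesian_product d_def)
  finally have "card {c\<in>{..<p * d}. Q p c \<and> (\<forall>q\<in>D. Q q c)} = (\<Prod>q\<in>insert p D. card {c. c < q \<and> Q q c})"
    using insert.hyps by simp
  moreover have "\<Prod>(insert p D) = p * d"
    using insert.hyps by (simp add: d_def)
  ultimately show ?case by simp
qed

lemma card_residue_class_bounds:
  fixes N d c :: nat
  assumes "c < d"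
  shows "real N / d - 1 \<le> card {n. n < N \<and> n mod d = c}"
    and "card {n. n < N \<and> n mod d = c} \<le> real N / d + 1"
proof -
  define S where "S = {n. n < N \<and> n mod d = c}"
  have "d > 0" using assms by simp
  have "real N = real d * real (N div d) + real (N mod d)"
    by (metis div_mult_mod_eq of_nat_add of_nat_mult mult.commute)
  moreover have "real (N mod d) < real d" using \<open>d > 0\<close> by simp
  ultimately have div_bounds: "real N / d - 1 \<le> real (N div d)" "real (N div d) \<le> real N / d"
    using \<open>d > 0\<close> by (simp_all add: field_simps)
  have "inj_on (\<lambda>n. n div d) S"
  proof (rule inj_onI)
    fix x y assume "x \<in> S" "y \<in> S" "x div d = y div d"
    then show "x = y" using div_mult_mod_eq[of x d] div_mult_mod_eq[of y d] by (auto simp: S_def)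
  qed
  moreover have "(\<lambda>n. n div d) ` S \<subseteq> {..N div d}"
    by (auto simp: S_def intro: div_le_mono)
  ultimately have "card S \<le> Suc (N div d)"
    using card_inj_on_le[of _ S "{..N div d}"] by simp
  then show "card S \<le> real N / d + 1" using div_bounds(2) by linarith
  have "inj_on (\<lambda>k. k * d + c) {..<N div d}"
    using \<open>d > 0\<close> by (auto intro: inj_onI)
  moreover have "(\<lambda>k. k * d + c) ` {..<N div d} \<subseteq> S"
  proof clarify
    fix k assume "k < N div d"
    then have "Suc k * d \<le> N div d * d" by (intro mult_right_mono) simp_all
    also have "\<dots> \<le> N" by (rule div_times_less_eq_dividend)
    finally show "k * d + c \<in> S" using assms by (simp add: S_def)
  qed
  ultimately have "N div d \<le> card S"
    using card_inj_on_le[of _ "{..<N div d}" S] by (simp add: S_def)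
  then show "real N / d - 1 \<le> card S" using div_bounds(1) by linarith
qed

lemma card_mod_in_residues:
  fixes R :: "nat set"
  assumes "R \<subseteq> {..<d}"
  shows "\<bar>real (card {n. n < N \<and> n mod d \<in> R}) - card R * real N / d\<bar> \<le> card R"
proof -
  have "finite R" using assms finite_subset by blast
  have "{n. n < N \<and> n mod d \<in> R} = (\<Union>c\<in>R. {n. n < N \<and> n mod d = c})" by auto
  also have "card \<dots> = (\<Sum>c\<in>R. card {n. n < N \<and> n mod d = c})"
    using \<open>finite R\<close> by (intro card_UN_disjoint) auto
  finally have card_eq: "real (card {n. n < N \<and> n mod d \<in> R}) = (\<Sum>c\<in>R. real (card {n. n < N \<and> n mod d = c}))"
    by simp
  have "(\<Sum>c\<in>R. real N / d - 1) \<le> real (card {n. n < N \<and> n mod d \<in> R})"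
    unfolding card_eq by (intro sum_mono card_residue_class_bounds) (use assms in auto)
  moreover have "real (card {n. n < N \<and> n mod d \<in> R}) \<le> (\<Sum>c\<in>R. real N / d + 1)"
    unfolding card_eq by (intro sum_mono card_residue_class_bounds) (use assms in auto)
  ultimately show ?thesis by (simp add: abs_le_iff algebra_simps)
qed

lemma dvd_twin_product_mod_iff:
  fixes q m c :: nat
  assumes "q dvd m"
  shows "q dvd (c mod m) * (c mod m + 2) \<longleftrightarrow> q dvd c * (c + 2)"
proof -
  have "(c mod m) mod q = c mod q" using assms by (rule mod_mod_cancel)
  then have "((c mod m) * (c mod m + 2)) mod q = (c * (c + 2)) mod q"
    by (metis mod_add_left_eq mod_mult_eq)
  then show ?thesis by (simp add: dvd_eq_mod_eq_0)
qed

lemma card_twin_residues_prime: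
  fixes p :: nat
  assumes "prime p" "odd p"
  shows "card {c. c < p \<and> p dvd c * (c + 2)} = 2"
proof -
  have "p \<ge> 3" using assms prime_ge_2_nat[of p] by (cases "p = 2") auto
  have "{c. c < p \<and> p dvd c * (c + 2)} = {0, p - 2}"
  proof (intro equalityI subsetI)
    fix c assume "c \<in> {c. c < p \<and> p dvd c * (c + 2)}"
    then have "c < p" "p dvd c \<or> p dvd c + 2"
      by (simp_all only: mem_Collect_eq prime_dvd_mult_iff[OF assms(1)])
    moreover have "c + 2 = p" if "p dvd c + 2" "c < p"
    proof -
      obtain k where k: "c + 2 = p * k" using \<open>p dvd c + 2\<close> by (elim dvdE)
      have "k \<noteq> 0" using k by (intro notI) simp
      moreover have "k < 2"
      proof (rule ccontr)
        assume "\<not> k < 2"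
        then have "p * 2 \<le> p * k" by simp
        then show False using k \<open>c < p\<close> \<open>p \<ge> 3\<close> by linarith
      qed
      ultimately show ?thesis using k by (simp add: less_2_cases_iff)
    qed
    ultimately show "c \<in> {0, p - 2}" using dvd_imp_le by fastforce
  next
    fix c assume c: "c \<in> {0, p - 2}"
    have "p - 2 + 2 = p" using \<open>p \<ge> 3\<close> by simp
    then have "p dvd (p - 2) * (p - 2 + 2)" by (metis dvd_triv_right)
    with c show "c \<in> {c. c < p \<and> p dvd c * (c + 2)}" using \<open>p \<ge> 3\<close> by auto
  qed
  then show ?thesis using \<open>p \<ge> 3\<close> by simp
qed

lemma card_twin_residues:
  fixes D :: "nat set"
  assumes "finite D" "\<forall>p\<in>D. prime p \<and> odd p"
  shows "card {c. c < \<Prod>D \<and> (\<forall>p\<in>D. p dvd c * (c + 2))} = 2 ^ card D"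
proof -
  have "p dvd (c mod p) * (c mod p + 2) \<longleftrightarrow> p dvd c * (c + 2)" for p c :: nat
    by (rule dvd_twin_product_mod_iff) simp
  then have "card {c. c < \<Prod>D \<and> (\<forall>p\<in>D. p dvd c * (c + 2))}
      = (\<Prod>p\<in>D. card {c. c < p \<and> p dvd c * (c + 2)})"
    using assms by (intro card_residues_mod_prod) auto
  also have "\<dots> = (\<Prod>p\<in>D. 2)"
    using assms card_twin_residues_prime by (intro prod.cong) auto
  finally show ?thesis by simp
qed

lemma card_twin_divisible_bound:
  fixes D :: "nat set"
  assumes "finite D" "\<forall>p\<in>D. prime p \<and> odd p"
  shows "\<bar>real (card {n. n < N \<and> (\<forall>p\<in>D. p dvd n * (n + 2))}) - 2 ^ card D * real N / real (\<Prod>D)\<bar>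
    \<le> 2 ^ card D"
proof -
  define R where "R = {c. c < \<Prod>D \<and> (\<forall>p\<in>D. p dvd c * (c + 2))}"
  have "\<Prod>D > 0" using assms by (auto intro: prod_pos prime_gt_0_nat)
  have "p dvd \<Prod>D" if "p \<in> D" for p using assms(1) that by (rule dvd_prodI)
  then have set_eq: "{n. n < N \<and> (\<forall>p\<in>D. p dvd n * (n + 2))} = {n. n < N \<and> n mod \<Prod>D \<in> R}"
    unfolding R_def mem_Collect_eq using dvd_twin_product_mod_iff \<open>\<Prod>D > 0\<close>
    by (meson mod_less_divisor)
  have card_R: "card R = 2 ^ card D" unfolding R_def using assms by (rule card_twin_residues)
  have "\<bar>real (card {n. n < N \<and> n mod \<Prod>D \<in> R}) - card R * real N / real (\<Prod>D)\<bar> \<le> card R"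
    by (rule card_mod_in_residues) (auto simp: R_def)
  then show ?thesis by (simp only: set_eq card_R of_nat_power of_nat_numeral)
qed

lemma prod_neg_two_over:
  fixes D :: "nat set"
  assumes "finite D"
  shows "(\<Prod>p\<in>D. - 2 / real p) = (-1) ^ card D * 2 ^ card D / real (\<Prod>D)"
proof -
  have "(\<Prod>p\<in>D. - 2 / real p) = (\<Prod>p\<in>D. - 2) / (\<Prod>p\<in>D. real p)"
    by (rule prod_dividef)
  also have "\<dots> = (-2) ^ card D / real (\<Prod>D)"
    by simp
  also have "(-2 :: real) ^ card D = (-1) ^ card D * 2 ^ card D"
    by (simp add: power_mult_distrib[symmetric])
  finally show ?thesis .
qed

lemma card_twin_sifted_le:
  fixes P :: "nat set"
  assumes "finite P" "\<forall>p\<in>P. prime p \<and> odd p" "even r"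
  shows "real (card {n. n < N \<and> (\<forall>p\<in>P. \<not> p dvd n * (n + 2))})
    \<le> real N * (\<Sum>D | D \<subseteq> P \<and> card D \<le> r. \<Prod>p\<in>D. - 2 / real p)
       + (\<Sum>D | D \<subseteq> P \<and> card D \<le> r. 2 ^ card D)"
proof -
  have "real (card {n. n < N \<and> (\<forall>p\<in>P. \<not> p dvd n * (n + 2))})
      \<le> (\<Sum>D | D \<subseteq> P \<and> card D \<le> r.
           (-1) ^ card D * real (card {n. n < N \<and> (\<forall>p\<in>D. p dvd n * (n + 2))}))"
    using card_sifted_le_bonferroni[OF assms(1) finite_lessThan[of N] assms(3),
        of "\<lambda>p n. p dvd n * (n + 2)"]
    by (simp only: lessThan_iff)
  also have "\<dots> \<le> (\<Sum>D | D \<subseteq> P \<and> card D \<le> r. real N * (\<Prod>p\<in>D. - 2 / real p) + 2 ^ card D)"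
  proof (rule sum_mono)
    fix D assume "D \<in> {D. D \<subseteq> P \<and> card D \<le> r}"
    then have "finite D" "\<forall>p\<in>D. prime p \<and> odd p" using assms finite_subset by auto
    then have "\<bar>real (card {n. n < N \<and> (\<forall>p\<in>D. p dvd n * (n + 2))}) - 2 ^ card D * real N / real (\<Prod>D)\<bar>
        \<le> 2 ^ card D"
      by (rule card_twin_divisible_bound)
    moreover have "(-1) ^ card D * (2 ^ card D * real N / real (\<Prod>D)) = real N * (\<Prod>p\<in>D. - 2 / real p)"
      unfolding prod_neg_two_over[OF \<open>finite D\<close>] by (simp add: algebra_simps)
    ultimately show "(-1) ^ card D * real (card {n. n < N \<and> (\<forall>p\<in>D. p dvd n * (n + 2))})
        \<le> real N * (\<Prod>p\<in>D. - 2 / real p) + 2 ^ card D"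
      by (cases "even (card D)") (auto simp: abs_le_iff)
  qed
  also have "\<dots> = real N * (\<Sum>D | D \<subseteq> P \<and> card D \<le> r. \<Prod>p\<in>D. - 2 / real p)
       + (\<Sum>D | D \<subseteq> P \<and> card D \<le> r. 2 ^ card D)"
    by (simp add: sum.distrib sum_distrib_left)
  finally show ?thesis .
qed

lemma prod_one_plus_eq_sum_Pow:
  fixes b :: "'a \<Rightarrow> 'b :: comm_semiring_1"
  assumes "finite P"
  shows "(\<Prod>p\<in>P. 1 + b p) = (\<Sum>D\<in>Pow P. \<Prod>p\<in>D. b p)"
  using prod_add[OF assms, of b "\<lambda>_. 1"] by (simp add: add.commute)

lemma sum_prod_small_subsets_le:
  fixes b :: "'a \<Rightarrow> real" and t :: real
  assumes "finite P" "t \<ge> 1"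
  shows "(\<Sum>D | D \<subseteq> P \<and> card D \<le> r. \<Prod>p\<in>D. b p)
      \<le> (\<Prod>p\<in>P. 1 + b p) + (1 / t) ^ (r + 1) * (\<Prod>p\<in>P. 1 + t * \<bar>b p\<bar>)"
proof -
  define B where "B = {D. D \<subseteq> P \<and> \<not> card D \<le> r}"
  have "finite B" using assms(1) by (simp add: B_def)
  have split: "(\<Prod>p\<in>P. 1 + b p)
      = (\<Sum>D | D \<subseteq> P \<and> card D \<le> r. \<Prod>p\<in>D. b p) + (\<Sum>D\<in>B. \<Prod>p\<in>D. b p)"
    unfolding prod_one_plus_eq_sum_Pow[OF assms(1)] B_def
    by (subst sum.union_disjoint[symmetric]) (auto simp: assms(1) intro!: sum.cong)
  have large: "\<bar>\<Prod>p\<in>D. b p\<bar> \<le> (1 / t) ^ (r + 1) * (\<Prod>p\<in>D. t * \<bar>b p\<bar>)" if "D \<in> B" for D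
  proof -
    have "t ^ (r + 1) \<le> t ^ card D"
      using that assms(2) by (intro power_increasing) (auto simp: B_def)
    then have "1 \<le> (1 / t) ^ (r + 1) * t ^ card D"
      using assms(2) by (simp add: field_simps)
    then have "1 * \<bar>\<Prod>p\<in>D. b p\<bar> \<le> ((1 / t) ^ (r + 1) * t ^ card D) * \<bar>\<Prod>p\<in>D. b p\<bar>"
      by (rule mult_right_mono) simp
    then show ?thesis by (simp add: prod.distrib abs_prod)
  qed
  have "(\<Sum>D\<in>B. \<bar>\<Prod>p\<in>D. b p\<bar>) \<le> (\<Sum>D\<in>B. (1 / t) ^ (r + 1) * (\<Prod>p\<in>D. t * \<bar>b p\<bar>))"
    using large by (rule sum_mono)
  then have "- (\<Sum>D\<in>B. \<Prod>p\<in>D. b p) \<le> (\<Sum>D\<in>B. (1 / t) ^ (r + 1) * (\<Prod>p\<in>D. t * \<bar>b p\<bar>))"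
    using sum_abs[of "\<lambda>D. \<Prod>p\<in>D. b p" B] by linarith
  also have "\<dots> \<le> (1 / t) ^ (r + 1) * (\<Sum>D\<in>Pow P. \<Prod>p\<in>D. t * \<bar>b p\<bar>)"
    unfolding sum_distrib_left[symmetric] using assms
    by (intro mult_left_mono sum_mono2) (auto simp: B_def intro!: prod_nonneg)
  also have "\<dots> = (1 / t) ^ (r + 1) * (\<Prod>p\<in>P. 1 + t * \<bar>b p\<bar>)"
    by (simp add: prod_one_plus_eq_sum_Pow[OF assms(1)])
  finally show ?thesis using split by linarith
qed

lemma sum_pow2_small_subsets_le:
  assumes "finite P"
  shows "(\<Sum>D | D \<subseteq> P \<and> card D \<le> r. (2::real) ^ card D) \<le> (real r + 1) * (2 * real (card P) + 1) ^ r"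
proof -
  have "(\<Sum>D | D \<subseteq> P \<and> card D \<le> r. (2::real) ^ card D)
      = (\<Sum>j\<le>r. \<Sum>D | D \<subseteq> P \<and> card D = j. 2 ^ card D)"
    by (subst sum.group[symmetric, where g = card and T = "{..r}"])
      (auto intro!: sum.cong arg_cong[where f = card] simp: assms)
  also have "\<dots> = (\<Sum>j\<le>r. real (card P choose j) * 2 ^ j)"
    by (simp add: n_subsets[OF assms])
  also have "\<dots> \<le> (\<Sum>j\<le>r. (2 * real (card P) + 1) ^ r)"
  proof (rule sum_mono)
    fix j assume "j \<in> {..r}"
    have "real (card P choose j) \<le> real (card P) ^ j"
      by (cases "j \<le> card P") (simp_all add: binomial_le_pow binomial_eq_0 flip: of_nat_power)
    then have "real (card P choose j) * 2 ^ j \<le> (2 * real (card P)) ^ j"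
      by (simp add: power_mult_distrib)
    also have "\<dots> \<le> (2 * real (card P) + 1) ^ r"
      using \<open>j \<in> {..r}\<close> by (intro order.trans[OF power_mono power_increasing]) auto
    finally show "real (card P choose j) * 2 ^ j \<le> (2 * real (card P) + 1) ^ r" .
  qed
  finally show ?thesis by (simp add: algebra_simps)
qed

lemma sum_geometric_le:
  fixes x :: real
  assumes "0 \<le> x" "x < 1"
  shows "(\<Sum>k\<le>V. x ^ k) \<le> 1 / (1 - x)"
  using sum_le_suminf[OF summable_geometric, of x "{..V}"] suminf_geometric[of x] assms by simp

lemma sum_inverse_le_factor_out_power:
  fixes q :: nat and A :: "nat set"
  assumes "q \<ge> 2" "finite A"
  shows "(\<Sum>n\<in>A. 1 / real n)
    \<le> real q / (real q - 1) * (\<Sum>k\<in>(\<lambda>n. n div q ^ multiplicity q n) ` A. 1 / real k)"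
proof -
  define v where "v n = multiplicity q n" for n
  define m where "m n = n div q ^ v n" for n
  define V where "V = Max (v ` A)"
  have decomp: "n = q ^ v n * m n" for n
    unfolding v_def m_def using multiplicity_dvd[of q n] by simp
  have inj: "inj_on (\<lambda>n. (v n, m n)) A"
    by (rule inj_onI) (metis decomp prod.inject)
  have "(\<Sum>n\<in>A. 1 / real n) = (\<Sum>n\<in>A. (1 / real q) ^ v n * (1 / real (m n)))"
  proof (rule sum.cong[OF refl])
    fix n
    have "real n = real q ^ v n * real (m n)" using decomp[of n] by (metis of_nat_mult of_nat_power)
    then show "1 / real n = (1 / real q) ^ v n * (1 / real (m n))" by (simp add: power_one_over)
  qed
  also have "\<dots> = (\<Sum>x\<in>(\<lambda>n. (v n, m n)) ` A. (1 / real q) ^ fst x * (1 / real (snd x)))"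
    by (simp add: sum.reindex[OF inj])
  also have "\<dots> \<le> (\<Sum>x\<in>{..V} \<times> m ` A. (1 / real q) ^ fst x * (1 / real (snd x)))"
    using assms(2) by (intro sum_mono2) (auto simp: V_def)
  also have "\<dots> = (\<Sum>i\<le>V. (1 / real q) ^ i) * (\<Sum>k\<in>m ` A. 1 / real k)"
    by (simp add: sum.cartesian_product' sum_product)
  also have "\<dots> \<le> real q / (real q - 1) * (\<Sum>k\<in>m ` A. 1 / real k)"
  proof (rule mult_right_mono)
    have "(\<Sum>i\<le>V. (1 / real q) ^ i) \<le> 1 / (1 - 1 / real q)"
      using assms(1) by (intro sum_geometric_le) auto
    then show "(\<Sum>i\<le>V. (1 / real q) ^ i) \<le> real q / (real q - 1)"
      using assms(1) by (simp add: field_simps)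
  qed (auto intro: sum_nonneg)
  finally show ?thesis by (simp add: m_def v_def)
qed

lemma sum_inverse_smooth_le_euler_product:
  fixes P A :: "nat set"
  assumes "finite P" "\<forall>p\<in>P. prime p"
    and "finite A" "\<forall>n\<in>A. n > 0 \<and> (\<forall>q. prime q \<and> q dvd n \<longrightarrow> q \<in> P)"
  shows "(\<Sum>n\<in>A. 1 / real n) \<le> (\<Prod>p\<in>P. real p / (real p - 1))"
  using assms
proof (induction P arbitrary: A rule: finite_induct)
  case empty
  have "A \<subseteq> {1}"
  proof
    fix n assume "n \<in> A"
    then show "n \<in> {1}" using empty.prems prime_factor_nat[of n] by auto
  qed
  then have "(\<Sum>n\<in>A. 1 / real n) \<le> (\<Sum>n\<in>{1}. 1 / real n)" by (intro sum_mono2) auto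
  then show ?case by simp
next
  case (insert q P A)
  have "q \<ge> 2" using insert.prems(1) prime_ge_2_nat by auto
  define m where "m n = n div q ^ multiplicity q n" for n
  have "\<forall>k\<in>m ` A. k > 0 \<and> (\<forall>r. prime r \<and> r dvd k \<longrightarrow> r \<in> P)"
  proof (intro ballI conjI allI impI)
    fix k assume "k \<in> m ` A"
    then obtain n where n: "n \<in> A" "k = m n" by auto
    have decomp: "n = q ^ multiplicity q n * m n"
      unfolding m_def using multiplicity_dvd[of q n] by simp
    then show "k > 0" using insert.prems(3) n by (metis gr0I mult_0_right)
    have "\<not> q dvd k"
      unfolding n m_def by (rule multiplicity_decompose) (use insert.prems(3) n \<open>q \<ge> 2\<close> in auto)
    fix r assume r: "prime r \<and> r dvd k"
    have "k dvd n" using decomp n(2) by (metis dvd_triv_right)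
    with r have "r dvd n" by (blast intro: dvd_trans)
    then have "r \<in> insert q P" using insert.prems(3) n(1) r by blast
    with \<open>\<not> q dvd k\<close> r show "r \<in> P" by auto
  qed
  then have "(\<Sum>k\<in>m ` A. 1 / real k) \<le> (\<Prod>p\<in>P. real p / (real p - 1))"
    using insert.IH insert.prems(1,2) by simp
  then have "real q / (real q - 1) * (\<Sum>k\<in>m ` A. 1 / real k)
      \<le> real q / (real q - 1) * (\<Prod>p\<in>P. real p / (real p - 1))"
    by (rule mult_left_mono) (use \<open>q \<ge> 2\<close> in simp)
  then have "(\<Sum>n\<in>A. 1 / real n) \<le> real q / (real q - 1) * (\<Prod>p\<in>P. real p / (real p - 1))"
    using sum_inverse_le_factor_out_power[OF \<open>q \<ge> 2\<close> insert.prems(2)] unfolding m_def by linarith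
  then show ?case using insert.hyps by simp
qed

lemma ln_le_euler_product:
  "ln (real z + 1) \<le> (\<Prod>p | prime p \<and> p \<le> z. real p / (real p - 1))"
proof -
  have "ln (real z + 1) \<le> harm z" by (rule ln_le_harm)
  also have "harm z = (\<Sum>n\<in>{1..z}. 1 / real n)" by (simp add: harm_def divide_inverse)
  also have "\<dots> \<le> (\<Prod>p | prime p \<and> p \<le> z. real p / (real p - 1))"
    by (rule sum_inverse_smooth_le_euler_product) (auto dest: dvd_imp_le)
  finally show ?thesis .
qed

definition odd_primes_upto :: "nat \<Rightarrow> nat set" where
  "odd_primes_upto w = {p. prime p \<and> odd p \<and> p \<le> w}"

definition odd_euler_product :: "nat \<Rightarrow> real" where
  "odd_euler_product w = (\<Prod>p\<in>odd_primes_upto w. real p / (real p - 1))"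

lemma finite_odd_primes_upto [simp]: "finite (odd_primes_upto w)"
  by (simp add: odd_primes_upto_def)

lemma odd_primes_upto_ge_3: "p \<in> odd_primes_upto w \<Longrightarrow> 3 \<le> p"
  using prime_ge_2_nat[of p] by (cases "p = 2") (auto simp: odd_primes_upto_def)

lemma odd_euler_product_ge_1: "odd_euler_product w \<ge> 1"
  unfolding odd_euler_product_def
  by (rule prod_ge_1) (auto dest: odd_primes_upto_ge_3 simp: field_simps)

lemma ln_le_odd_euler_product: "ln (real w + 1) \<le> 2 * odd_euler_product w"
proof -
  define Q where "Q = {p. prime p \<and> p \<le> w}"
  have "odd_primes_upto w \<subseteq> Q" "finite Q" by (auto simp: odd_primes_upto_def Q_def)
  then have "(\<Prod>p\<in>Q. real p / (real p - 1))
      = (\<Prod>p\<in>Q - odd_primes_upto w. real p / (real p - 1)) * odd_euler_product w"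
    unfolding odd_euler_product_def by (rule prod.subset_diff)
  also have "(\<Prod>p\<in>Q - odd_primes_upto w. real p / (real p - 1)) \<le> (\<Prod>p\<in>{2}. real p / (real p - 1))"
  proof (rule prod_mono2)
    show "Q - odd_primes_upto w \<subseteq> {2}"
      using primes_dvd_imp_eq[of "2 :: nat"] by (auto simp: Q_def odd_primes_upto_def)
  qed (auto simp: Q_def dest: prime_gt_1_nat)
  finally have "(\<Prod>p\<in>Q. real p / (real p - 1)) \<le> 2 * odd_euler_product w"
    using odd_euler_product_ge_1[of w] by simp
  then show ?thesis using ln_le_euler_product[of w] by (simp add: Q_def)
qed

lemma odd_euler_product_Suc_le: "odd_euler_product (Suc w) \<le> 3 / 2 * odd_euler_product w"
proof (cases "Suc w \<in> odd_primes_upto (Suc w)")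
  case True
  then have "odd_primes_upto (Suc w) = insert (Suc w) (odd_primes_upto w)"
    by (auto simp: odd_primes_upto_def le_Suc_eq)
  then have "odd_euler_product (Suc w) = real (Suc w) / (real (Suc w) - 1) * odd_euler_product w"
    by (simp add: odd_euler_product_def odd_primes_upto_def)
  also have "\<dots> \<le> 3 / 2 * odd_euler_product w"
    using odd_primes_upto_ge_3[OF True] odd_euler_product_ge_1[of w]
    by (intro mult_right_mono) (auto simp: field_simps)
  finally show ?thesis .
next
  case False
  then have "odd_primes_upto (Suc w) = odd_primes_upto w"
    by (auto simp: odd_primes_upto_def le_Suc_eq)
  then show ?thesis using odd_euler_product_ge_1[of w] by (simp add: odd_euler_product_def)
qed

text \<open>Since \<open>w \<mapsto> odd_euler_product w\<close> is unbounded but grows by a factor of at most \<open>3/2\<close>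
  per step, the first \<open>w\<close> at which it reaches \<open>K\<close> also bounds it from above.\<close>
lemma odd_euler_product_between:
  assumes "K \<ge> 1"
  obtains w where "K \<le> odd_euler_product w" "odd_euler_product w \<le> 3 / 2 * K" "real w \<le> exp (2 * K) + 1"
proof -
  define z where "z = nat \<lceil>exp (2 * K)\<rceil>"
  have "real z = of_int \<lceil>exp (2 * K)\<rceil>"
    unfolding z_def by (rule of_nat_nat) (simp add: order.strict_trans2[OF _ exp_ge_zero])
  then have "exp (2 * K) \<le> real z" "real z \<le> exp (2 * K) + 1"
    using of_int_ceiling_le_add_one[of "exp (2 * K)"] by linarith+
  then have "2 * K \<le> ln (real z + 1)" by (subst ln_ge_iff) auto
  then have reach: "K \<le> odd_euler_product z" using ln_le_odd_euler_product[of z] by linarith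
  define w where "w = (LEAST w. K \<le> odd_euler_product w)"
  have "K \<le> odd_euler_product w" unfolding w_def by (rule LeastI[of _ z]) (rule reach)
  moreover have "w \<le> z" unfolding w_def by (rule Least_le) (rule reach)
  moreover have "odd_euler_product w \<le> 3 / 2 * K"
  proof (cases w)
    case 0
    have "odd_primes_upto 0 = {}" by (auto simp: odd_primes_upto_def dest: prime_gt_0_nat)
    then show ?thesis using 0 assms by (simp add: odd_euler_product_def)
  next
    case (Suc w')
    then have "\<not> K \<le> odd_euler_product w'"
      using not_less_Least[of w' "\<lambda>w. K \<le> odd_euler_product w"] by (simp add: w_def)
    then show ?thesis using odd_euler_product_Suc_le[of w'] Suc by simp
  qed
  ultimately show ?thesis using that \<open>real z \<le> exp (2 * K) + 1\<close> by simp
qed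

lemma sum_inverse_odd_primes_le_ln:
  "(\<Sum>p\<in>odd_primes_upto w. 1 / real p) \<le> ln (odd_euler_product w)"
proof -
  have "(\<Sum>p\<in>odd_primes_upto w. 1 / real p) \<le> (\<Sum>p\<in>odd_primes_upto w. ln (real p / (real p - 1)))"
  proof (rule sum_mono)
    fix p assume "p \<in> odd_primes_upto w"
    then have p: "real p \<ge> 3" using odd_primes_upto_ge_3 by simp
    have "ln ((real p - 1) / real p) \<le> (real p - 1) / real p - 1"
      using p by (intro ln_le_minus_one) auto
    moreover have "ln (real p / (real p - 1)) = - ln ((real p - 1) / real p)"
      using p by (simp add: ln_div)
    ultimately show "1 / real p \<le> ln (real p / (real p - 1))"
      using p by (simp add: field_simps)
  qed
  also have "\<dots> = ln (odd_euler_product w)" unfolding odd_euler_product_def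
    by (rule ln_prod[symmetric]) (auto dest: odd_primes_upto_ge_3)
  finally show ?thesis .
qed

lemma prod_one_minus_two_over_le:
  "(\<Prod>p\<in>odd_primes_upto w. 1 - 2 / real p) \<le> 1 / odd_euler_product w ^ 2"
proof -
  have "(\<Prod>p\<in>odd_primes_upto w. 1 - 2 / real p) \<le> (\<Prod>p\<in>odd_primes_upto w. ((real p - 1) / real p) ^ 2)"
  proof (rule prod_mono)
    fix p assume "p \<in> odd_primes_upto w"
    then have p: "real p \<ge> 3" using odd_primes_upto_ge_3 by simp
    have "((real p - 1) / real p) ^ 2 = 1 - 2 / real p + 1 / (real p)^2"
      using p by (simp add: field_simps power2_eq_square)
    then show "0 \<le> 1 - 2 / real p \<and> 1 - 2 / real p \<le> ((real p - 1) / real p) ^ 2"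
      using p by (simp add: field_simps)
  qed
  also have "\<dots> = (\<Prod>p\<in>odd_primes_upto w. (real p - 1) / real p) ^ 2"
    by (simp add: prod_power_distrib)
  also have "(\<Prod>p\<in>odd_primes_upto w. (real p - 1) / real p) = 1 / odd_euler_product w"
    by (simp add: odd_euler_product_def prod_dividef)
  also have "(1 / odd_euler_product w) ^ 2 = 1 / odd_euler_product w ^ 2"
    by (simp add: power_one_over)
  finally show ?thesis .
qed

lemma card_twin_primes_le_card_sifted:
  "card {p. p < N \<and> prime p \<and> prime (p + 2)}
    \<le> w + card {n. n < N \<and> (\<forall>q\<in>odd_primes_upto w. \<not> q dvd n * (n + 2))}"
proof -
  define S where "S = {n. n < N \<and> (\<forall>q\<in>odd_primes_upto w. \<not> q dvd n * (n + 2))}"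
  have "{p. p < N \<and> prime p \<and> prime (p + 2)} \<subseteq> {1..w} \<union> S"
  proof
    fix p assume p: "p \<in> {p. p < N \<and> prime p \<and> prime (p + 2)}"
    have "\<not> q dvd p * (p + 2)" if "q \<in> odd_primes_upto w" "w < p" for q
    proof
      assume "q dvd p * (p + 2)"
      moreover have "prime q" "q \<le> w" using that by (auto simp: odd_primes_upto_def)
      ultimately have "q dvd p \<or> q dvd p + 2" by (simp only: prime_dvd_mult_iff)
      then have "q = p \<or> q = p + 2" using p \<open>prime q\<close> primes_dvd_imp_eq by blast
      then show False using \<open>q \<le> w\<close> \<open>w < p\<close> by linarith
    qed
    then show "p \<in> {1..w} \<union> S" using p prime_gt_0_nat[of p] by (auto simp: S_def not_le)
  qed
  moreover have "finite S" by (simp add: S_def)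
  ultimately have "card {p. p < N \<and> prime p \<and> prime (p + 2)} \<le> card ({1..w} \<union> S)"
    by (intro card_mono) simp_all
  also have "\<dots> \<le> w + card S"
    using card_Un_le[of "{1..w}" S] by simp
  finally show ?thesis by (simp add: S_def)
qed

lemma sum_small_subsets_prod_neg_two_over_le:
  "(\<Sum>D | D \<subseteq> odd_primes_upto w \<and> card D \<le> r. \<Prod>p\<in>D. - 2 / real p)
    \<le> 1 / odd_euler_product w ^ 2 + (1 / 2) ^ (r + 1) * odd_euler_product w ^ 4"
proof -
  define P where "P = odd_primes_upto w"
  define G where "G = odd_euler_product w"
  have "finite P" by (simp add: P_def)
  have "G \<ge> 1" using odd_euler_product_ge_1 by (simp add: G_def)
  have "(\<Prod>p\<in>P. 1 + 2 * \<bar>- 2 / real p\<bar>) \<le> exp (\<Sum>p\<in>P. 4 * (1 / real p))"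
    by (rule order.trans[OF _ prod_le_exp_sum]) simp_all
  also have "\<dots> = exp (4 * (\<Sum>p\<in>P. 1 / real p))"
    by (simp only: sum_distrib_left)
  also have "\<dots> \<le> exp (4 * ln G)"
    using sum_inverse_odd_primes_le_ln[of w] by (simp add: P_def G_def)
  also have "\<dots> = G ^ 4" using \<open>G \<ge> 1\<close> ln_realpow[of G 4] exp_ln[of "G ^ 4"] by simp
  finally have "(1 / 2) ^ (r + 1) * (\<Prod>p\<in>P. 1 + 2 * \<bar>- 2 / real p\<bar>) \<le> (1 / 2) ^ (r + 1) * G ^ 4"
    by (rule mult_left_mono) simp
  moreover have "(\<Prod>p\<in>P. 1 + - 2 / real p) \<le> 1 / G ^ 2"
    using prod_one_minus_two_over_le[of w] by (simp add: P_def G_def)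
  ultimately show ?thesis
    using sum_prod_small_subsets_le[OF \<open>finite P\<close>, where t = 2 and r = r and b = "\<lambda>p. - 2 / real p"]
    unfolding P_def[symmetric] G_def[symmetric] by linarith
qed

lemma card_twin_primes_le_sieve:
  assumes "even r"
  shows "real (card {p. p < N \<and> prime p \<and> prime (p + 2)})
    \<le> real w + real N * (1 / odd_euler_product w ^ 2 + (1 / 2) ^ (r + 1) * odd_euler_product w ^ 4)
       + (real r + 1) * (2 * real w + 1) ^ r"
proof -
  define P where "P = odd_primes_upto w"
  have "finite P" and P_primes: "\<forall>p\<in>P. prime p \<and> odd p" by (auto simp: P_def odd_primes_upto_def)
  have "P \<subseteq> {1..w}"
    by (auto simp: P_def odd_primes_upto_def dest: prime_gt_0_nat)
  then have "card P \<le> w"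
    using card_mono[of "{1..w}" P] by simp
  then have "(real r + 1) * (2 * real (card P) + 1) ^ r \<le> (real r + 1) * (2 * real w + 1) ^ r"
    by (intro mult_left_mono power_mono) simp_all
  then have error: "(\<Sum>D | D \<subseteq> P \<and> card D \<le> r. (2::real) ^ card D) \<le> (real r + 1) * (2 * real w + 1) ^ r"
    using sum_pow2_small_subsets_le[OF \<open>finite P\<close>, of r] by linarith
  have main: "real N * (\<Sum>D | D \<subseteq> P \<and> card D \<le> r. \<Prod>p\<in>D. - 2 / real p)
      \<le> real N * (1 / odd_euler_product w ^ 2 + (1 / 2) ^ (r + 1) * odd_euler_product w ^ 4)"
    unfolding P_def by (intro mult_left_mono sum_small_subsets_prod_neg_two_over_le) simp
  show ?thesis
    using card_twin_primes_le_card_sifted[of N w] card_twin_sifted_le[OF \<open>finite P\<close> P_primes assms, of N]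
      main error
    unfolding P_def by linarith
qed

lemma sieve_main_term_le:
  fixes K G :: real
  assumes "K \<ge> 1" "K \<le> G" "G \<le> 3 / 2 * K" "10 * ln K \<le> real r"
  shows "1 / G ^ 2 + (1 / 2) ^ (r + 1) * G ^ 4 \<le> 7 / K ^ 2"
proof -
  have "ln K \<ge> 0" using assms(1) by simp
  have "K ^ 6 \<le> 2 ^ r"
  proof -
    have "6 * ln K \<le> 10 * ln K * (2 / 3)" using \<open>ln K \<ge> 0\<close> by simp
    also have "\<dots> \<le> real r * ln 2"
      using assms(4) ln2_ge_two_thirds \<open>ln K \<ge> 0\<close> by (intro mult_mono) simp_all
    finally have "exp (6 * ln K) \<le> exp (real r * ln 2)" by simp
    moreover have "exp (6 * ln K) = K ^ 6"
      using assms(1) powr_realpow[of K 6] by (simp add: powr_def)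
    moreover have "exp (real r * ln 2) = 2 ^ r"
      using powr_realpow[of 2 r] by (simp add: powr_def)
    ultimately show ?thesis by simp
  qed
  have "(1 / 2) ^ (r + 1) * G ^ 4 \<le> 1 / K ^ 6 * (3 / 2 * K) ^ 4"
  proof (rule mult_mono)
    have "(1 / 2) ^ (r + 1) \<le> (1 / 2 :: real) ^ r" by simp
    also have "\<dots> \<le> 1 / K ^ 6"
      using \<open>K ^ 6 \<le> 2 ^ r\<close> assms(1) by (simp add: power_one_over divide_left_mono)
    finally show "(1 / 2) ^ (r + 1) \<le> 1 / K ^ 6" .
    show "G ^ 4 \<le> (3 / 2 * K) ^ 4"
      using assms(1-3) by (intro power_mono) simp_all
  qed simp_all
  also have "\<dots> = 81 / 16 / K ^ 2" using assms(1) by (simp add: field_simps eval_nat_numeral)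
  finally have "(1 / 2) ^ (r + 1) * G ^ 4 \<le> 81 / 16 / K ^ 2" .
  moreover have "1 / G ^ 2 \<le> 1 / K ^ 2"
    using assms(1,2) by (intro divide_left_mono power_mono) simp_all
  ultimately have "1 / G ^ 2 + (1 / 2) ^ (r + 1) * G ^ 4 \<le> 1 / K ^ 2 + 81 / 16 / K ^ 2"
    by linarith
  also have "\<dots> \<le> 7 / K ^ 2" using assms(1) by (simp add: divide_simps)
  finally show ?thesis .
qed

lemma card_twin_primes_le_log:
  fixes K :: real
  assumes "K \<ge> 1"
  shows "real (card {p. p < N \<and> prime p \<and> prime (p + 2)})
    \<le> exp (2 * K) + 1 + 7 * real N / K ^ 2
       + (10 * ln K + 3) * (2 * exp (2 * K) + 3) powr (10 * ln K + 2)"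
proof -
  obtain w where w: "K \<le> odd_euler_product w" "odd_euler_product w \<le> 3 / 2 * K"
    "real w \<le> exp (2 * K) + 1"
    using odd_euler_product_between[OF assms] .
  \<comment> \<open>\<open>r \<approx> 10 ln K\<close> is large enough that \<open>2 ^ r \<ge> K ^ 6\<close> absorbs the tail \<open>G ^ 4\<close>, and small
    enough that the error term \<open>(2 w + 1) ^ r = exp (O (K ln K))\<close> is \<open>N ^ o(1)\<close>.\<close>
  define r where "r = 2 * nat \<lceil>5 * ln K\<rceil>"
  have "ln K \<ge> 0" using assms by simp
  have "even r" by (simp add: r_def)
  have r_lower: "10 * ln K \<le> real r" and r_upper: "real r \<le> 10 * ln K + 2"
    unfolding r_def using \<open>ln K \<ge> 0\<close> by linarith+
  have "real N * (1 / odd_euler_product w ^ 2 + (1 / 2) ^ (r + 1) * odd_euler_product w ^ 4)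
      \<le> real N * (7 / K ^ 2)"
    using sieve_main_term_le[OF assms w(1,2) r_lower] by (rule mult_left_mono) simp
  moreover have "(real r + 1) * (2 * real w + 1) ^ r
      \<le> (10 * ln K + 3) * (2 * exp (2 * K) + 3) powr (10 * ln K + 2)"
  proof (rule mult_mono)
    have "(2 * real w + 1) ^ r \<le> (2 * exp (2 * K) + 3) ^ r"
      using w(3) by (intro power_mono) simp_all
    also have "\<dots> = (2 * exp (2 * K) + 3) powr real r"
      by (simp add: powr_realpow add_pos_pos)
    also have "\<dots> \<le> (2 * exp (2 * K) + 3) powr (10 * ln K + 2)"
      using r_upper by (intro powr_mono) simp_all
    finally show "(2 * real w + 1) ^ r \<le> (2 * exp (2 * K) + 3) powr (10 * ln K + 2)" .
  qed (use r_upper \<open>ln K \<ge> 0\<close> in simp_all)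
  moreover have "real N * (7 / K ^ 2) = 7 * real N / K ^ 2" by simp
  ultimately show ?thesis
    using card_twin_primes_le_sieve[OF \<open>even r\<close>, of N w] w(3) by linarith
qed

lemma card_twin_primes_eventually_le:
  "eventually (\<lambda>N. real (card {p. p < N \<and> prime p \<and> prime (p + 2)})
     \<le> 8 * real N / ln (real N) powr (6 / 5)) sequentially"
proof -
  have "eventually (\<lambda>x::real. exp (2 * ln x powr (3 / 5)) + 1 \<le> x / ln x powr (6 / 5) / 2) at_top"
    by real_asymp
  moreover have "eventually (\<lambda>x::real. (10 * ln (ln x powr (3 / 5)) + 3)
      * (2 * exp (2 * ln x powr (3 / 5)) + 3) powr (10 * ln (ln x powr (3 / 5)) + 2)
      \<le> x / ln x powr (6 / 5) / 2) at_top"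
    by real_asymp
  moreover have "eventually (\<lambda>x::real. 1 \<le> ln x powr (3 / 5)) at_top"
    by real_asymp
  moreover have "eventually (\<lambda>x::real. 1 < x) at_top"
    by (rule eventually_gt_at_top)
  ultimately have "eventually (\<lambda>x::real. exp (2 * ln x powr (3 / 5)) + 1 \<le> x / ln x powr (6 / 5) / 2
      \<and> (10 * ln (ln x powr (3 / 5)) + 3)
          * (2 * exp (2 * ln x powr (3 / 5)) + 3) powr (10 * ln (ln x powr (3 / 5)) + 2)
        \<le> x / ln x powr (6 / 5) / 2
      \<and> 1 \<le> ln x powr (3 / 5) \<and> 1 < x) at_top"
    by eventually_elim blast
  from eventually_compose_filterlim[OF this filterlim_real_sequentially]
  show ?thesis
  proof eventually_elim
    case (elim N)
    define K where "K = ln (real N) powr (3 / 5)"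
    define L where "L = ln (real N) powr (6 / 5)"
    note bounds = elim[folded K_def L_def]
    have "K ^ 2 = L"
      using elim by (simp add: K_def L_def powr_power)
    then have "7 * real N / K ^ 2 = 7 * (real N / L)" by simp
    moreover have "8 * real N / L = 8 * (real N / L)" by simp
    ultimately show ?case
      using card_twin_primes_le_log[of K N] bounds unfolding L_def[symmetric] by linarith
  qed
qed

lemma sum_lessThan_two_power_eq_dyadic_blocks:
  fixes f :: "nat \<Rightarrow> 'a :: comm_monoid_add"
  shows "(\<Sum>n<2 ^ M. f n) = f 0 + (\<Sum>k<M. \<Sum>n\<in>{2 ^ k..<2 ^ Suc k}. f n)"
proof (induction M)
  case (Suc M)
  have "(\<Sum>n<2 ^ Suc M. f n) = (\<Sum>n<2 ^ M. f n) + (\<Sum>n\<in>{2 ^ M..<2 ^ Suc M}. f n)"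
    by (simp add: sum.atLeastLessThan_concat[symmetric] atLeast0LessThan[symmetric])
  with Suc show ?case by (simp add: add.assoc)
qed simp

lemma summable_if_dyadic_blocks_summable:
  fixes f :: "nat \<Rightarrow> real"
  assumes "\<And>n. 0 \<le> f n" and "summable (\<lambda>k. \<Sum>n\<in>{2 ^ k..<2 ^ Suc k}. f n)"
  shows "summable f"
proof (rule summableI_nonneg_bounded)
  fix M
  have "(\<Sum>n<M. f n) \<le> (\<Sum>n<2 ^ M. f n)"
    using assms(1) less_exp[of M] by (intro sum_mono2) auto
  also have "\<dots> \<le> f 0 + (\<Sum>k. \<Sum>n\<in>{2 ^ k..<2 ^ Suc k}. f n)"
    unfolding sum_lessThan_two_power_eq_dyadic_blocks
    using assms by (intro add_left_mono sum_le_suminf) (auto intro: sum_nonneg)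
  finally show "(\<Sum>n<M. f n) \<le> f 0 + (\<Sum>k. \<Sum>n\<in>{2 ^ k..<2 ^ Suc k}. f n)" .
qed (use assms in simp)

lemma sum_dyadic_block_inverse_le:
  fixes P :: "nat \<Rightarrow> bool"
  shows "(\<Sum>n\<in>{2 ^ k..<2 ^ Suc k}. if P n then 1 / real n else 0)
    \<le> real (card {n. n < 2 ^ Suc k \<and> P n}) / 2 ^ k"
proof -
  have "(\<Sum>n\<in>{2 ^ k..<2 ^ Suc k}. if P n then 1 / real n else 0)
      \<le> (\<Sum>n\<in>{2 ^ k..<2 ^ Suc k}. if P n then 1 / 2 ^ k else 0)"
  proof (rule sum_mono)
    fix n :: nat assume "n \<in> {2 ^ k..<2 ^ Suc k}"
    then have "(2::real) ^ k \<le> real n"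
      by (metis atLeastLessThan_iff of_nat_le_iff of_nat_numeral of_nat_power)
    then show "(if P n then 1 / real n else 0) \<le> (if P n then 1 / 2 ^ k else 0)"
      by (simp add: frac_le)
  qed
  also have "\<dots> = real (card {n \<in> {2 ^ k..<2 ^ Suc k}. P n}) / 2 ^ k"
    by (simp add: sum.If_cases Int_def)
  also have "\<dots> \<le> real (card {n. n < 2 ^ Suc k \<and> P n}) / 2 ^ k"
    by (intro divide_right_mono card_mono of_nat_mono) auto
  finally show ?thesis .
qed

lemma summable_inverse_if_counting_bound:
  fixes P :: "nat \<Rightarrow> bool" and C a :: real
  assumes "a > 1"
    and "eventually (\<lambda>N. real (card {n. n < N \<and> P n}) \<le> C * real N / ln (real N) powr a) sequentially"
  shows "summable (\<lambda>n. if P n then 1 / real n else 0)"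
proof (rule summable_if_dyadic_blocks_summable)
  obtain N0 where N0: "\<And>N. N \<ge> N0 \<Longrightarrow> real (card {n. n < N \<and> P n}) \<le> C * real N / ln (real N) powr a"
    using assms(2) by (auto simp: eventually_at_top_linorder)
  have "eventually (\<lambda>k. norm (\<Sum>n\<in>{2 ^ k..<2 ^ Suc k}. if P n then 1 / real n else 0)
      \<le> 2 * C / ln 2 powr a * real (Suc k) powr (- a)) sequentially"
    using eventually_ge_at_top[of N0]
  proof eventually_elim
    case (elim k)
    have "N0 \<le> 2 ^ Suc k" using elim less_exp[of "Suc k"] by linarith
    have "norm (\<Sum>n\<in>{2 ^ k..<2 ^ Suc k}. if P n then 1 / real n else 0)
        \<le> real (card {n. n < 2 ^ Suc k \<and> P n}) / 2 ^ k"
      using sum_dyadic_block_inverse_le[of P k] by (simp add: sum_nonneg)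
    also have "\<dots> \<le> C * 2 ^ Suc k / ln (2 ^ Suc k) powr a / 2 ^ k"
      using N0[OF \<open>N0 \<le> 2 ^ Suc k\<close>] by (intro divide_right_mono) simp_all
    also have "ln ((2::real) ^ Suc k) powr a = real (Suc k) powr a * ln 2 powr a"
      unfolding ln_realpow by (simp add: powr_mult)
    also have "C * 2 ^ Suc k / (real (Suc k) powr a * ln 2 powr a) / 2 ^ k
        = 2 * C / ln 2 powr a * real (Suc k) powr (- a)"
      by (simp add: powr_minus field_simps)
    finally show ?case .
  qed
  moreover have "summable (\<lambda>k. 2 * C / ln 2 powr a * real (Suc k) powr (- a))"
    using assms(1) summable_Suc_iff[of "\<lambda>n. real n powr (- a)"]
    by (intro summable_mult) (simp add: summable_real_powr_iff)
  ultimately show "summable (\<lambda>k. \<Sum>n\<in>{2 ^ k..<2 ^ Suc k}. if P n then 1 / real n else 0)"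
    by (rule summable_comparison_test_ev)
qed (simp)

theorem corollary3p3:
  shows "summable (\<lambda>p::nat. if prime p \<and> prime (p + 2) then 1 / real p else 0)"
  by (rule summable_inverse_if_counting_bound[OF _ card_twin_primes_eventually_le]) simp

end
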